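(* For every integer $t\ge 2$, every convex polygon whose vertices are points of $S_t$ has at most $t-1$ vertices.
   Context: For integers $r\ge 1$ let $\delta_r:=3\cdot 4^{r-1}$ and $\delta_r':=(3r+1)\cdot 4^{r-1}$. For positive integers $k,l$ define $S_{k,l}\subset\mathbb{Z}^2$ recursively: $S_{k,l}:=\{(0,0)\}$ if $k\le 2$ or $l\le 2$; otherwise $S_{k,l}:=S_{k-1,l}\cup\{(x+\delta_{k+l-1},\,y+\delta_{k+l-1}'):(x,y)\in S_{k,l-1}\}$. Let $t\ge 2$ be an integer. For $0\le i\le t-3$ define $v_i:=(3(t-i),-3i)$, and let $w_0:=(0,0)$, $w_{i+1}:=w_i+v_i$ for $i=0,\dots,t-3$. For $i=0,\dots,t-2$ let $q_i:=(t+1)4^{t+1}w_i$. Define $S_t:=\bigcup_{i=0}^{t-2}\{p+q_i: p\in S_{t-i,i+2}\}$. *)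

theory Defs
  imports "HOL-Analysis.Analysis"
begin

definition delta :: "nat \<Rightarrow> int" where
  "delta r = 3 * 4 ^ (r - 1)"

definition delta' :: "nat \<Rightarrow> int" where
  "delta' r = (3 * int r + 1) * 4 ^ (r - 1)"

function Skl :: "nat \<Rightarrow> nat \<Rightarrow> (int \<times> int) set" where
  "Skl k l = (if k \<le> 2 \<or> l \<le> 2 then {(0, 0)}
     else Skl (k - 1) l \<union>
          (\<lambda>(x, y). (x + delta (k + l - 1), y + delta' (k + l - 1))) ` Skl k (l - 1))"
  by pat_completeness auto
termination by (relation "Wellfounded.measure (\<lambda>(k, l). k + l)") auto

definition v :: "nat \<Rightarrow> nat \<Rightarrow> int \<times> int" where
  "v t i = (3 * (int t - int i), - 3 * int i)"

fun w :: "nat \<Rightarrow> nat \<Rightarrow> int \<times> int" where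
  "w t 0 = (0, 0)"
| "w t (Suc i) = (fst (w t i) + fst (v t i), snd (w t i) + snd (v t i))"

definition q :: "nat \<Rightarrow> nat \<Rightarrow> int \<times> int" where
  "q t i = (let c = (int t + 1) * 4 ^ (t + 1) in (c * fst (w t i), c * snd (w t i)))"

definition St :: "nat \<Rightarrow> (int \<times> int) set" where
  "St t = (\<Union>i\<in>{0..t - 2}. (\<lambda>p. (fst p + fst (q t i), snd p + snd (q t i))) ` Skl (t - i) (i + 2))"

definition to_real :: "int \<times> int \<Rightarrow> real \<times> real" where
  "to_real p = (real_of_int (fst p), real_of_int (snd p))"

text \<open>A finite point set is the vertex set of a convex polygon iff it is in convex
  position: no point lies in the convex hull of the others.\<close>
definition convex_position :: "(real \<times> real) set \<Rightarrow> bool" where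
  "convex_position P \<longleftrightarrow> (\<forall>p\<in>P. p \<notin> convex hull (P - {p}))"

end

theory Submission
  imports Defs
begin

text \<open>
  \<open>S\<^sub>k\<^sub>,\<^sub>l\<close> is the Erdos-Szekeres construction: a copy of \<open>S\<^bsub>k-1,l\<^esub>\<close> followed, far to the
  right and higher up, by a copy of \<open>S\<^bsub>k,l-1\<^esub>\<close>, where every slope inside the two parts is
  below \<open>k+l-1\<close> and every slope between them is above it. So a cup meeting the left part has
  at most one point in the right part, a cap meeting the right part has at most one point in the
  left part, and induction shows that cups have at most \<open>k-1\<close> and caps at most \<open>l-1\<close> points.

  \<open>S\<^sub>t\<close> places the sets \<open>S\<^bsub>t-i,i+2\<^esub>\<close> along the chain \<open>w\<^sub>0, \<dots>, w\<^sub>t\<^sub>-\<^sub>2\<close>, whose edges \<open>v\<^sub>i\<close> have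
  decreasing slopes, scaled up so far that each copy is tiny: slopes inside a copy exceed 1, slopes between copies are below 1, and
  between the \<open>m\<close>-th and the next edge of the chain there is a slope separating pairs of earlier
  copies from pairs of later ones. Hence a cup ending in copy \<open>j\<close> has at most \<open>t-j-1\<close> points in
  that copy and one point before it, and a cap ending in copy \<open>j\<close> has at most \<open>i+1\<close> points in its
  first copy \<open>i\<close> and one point in each later copy. A convex polygon splits at its leftmost and
  rightmost vertices into a lower cup and an upper cap sharing these two vertices, both ending in
  the copy \<open>j\<close> of the rightmost vertex, so it has at most \<open>(t-j) + (j+1) - 2 = t-1\<close> vertices.
\<close>

section \<open>Slopes, cups and caps\<close>

text \<open>Only used for points with distinct abscissae; otherwise the division by zero yields 0.\<close>

definition slope :: "int \<times> int \<Rightarrow> int \<times> int \<Rightarrow> real" where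
  "slope a b = real_of_int (snd b - snd a) / real_of_int (fst b - fst a)"

lemma slope_translate [simp]: "slope (a + d) (b + d) = slope a b"
  by (simp add: slope_def)

lemma slope_commute: "slope a b = slope b a"
  unfolding slope_def by (metis minus_diff_eq minus_divide_divide of_int_minus)

lemma less_slope_iff:
  assumes "0 < \<alpha>" "fst a < fst b"
  shows "of_int \<beta> / of_int \<alpha> < slope a b \<longleftrightarrow> \<beta> * (fst b - fst a) < \<alpha> * (snd b - snd a)"
proof -
  have "of_int \<beta> / of_int \<alpha> < slope a b \<longleftrightarrow>
      real_of_int (\<beta> * (fst b - fst a)) < of_int (\<alpha> * (snd b - snd a))"
    using assms unfolding slope_def by (simp add: divide_simps mult.commute)
  then show ?thesis by linarith
qed

lemma slope_less_iff:
  assumes "0 < \<alpha>" "fst a < fst b"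
  shows "slope a b < of_int \<beta> / of_int \<alpha> \<longleftrightarrow> \<alpha> * (snd b - snd a) < \<beta> * (fst b - fst a)"
proof -
  have "slope a b < of_int \<beta> / of_int \<alpha> \<longleftrightarrow>
      real_of_int (\<alpha> * (snd b - snd a)) < of_int (\<beta> * (fst b - fst a))"
    using assms unfolding slope_def by (simp add: divide_simps mult.commute)
  then show ?thesis by linarith
qed

definition cup :: "(int \<times> int) set \<Rightarrow> bool" where
  "cup C \<longleftrightarrow> (\<forall>a\<in>C. \<forall>b\<in>C. \<forall>c\<in>C. fst a < fst b \<longrightarrow> fst b < fst c \<longrightarrow> slope a b < slope b c)"

definition cap :: "(int \<times> int) set \<Rightarrow> bool" where
  "cap C \<longleftrightarrow> (\<forall>a\<in>C. \<forall>b\<in>C. \<forall>c\<in>C. fst a < fst b \<longrightarrow> fst b < fst c \<longrightarrow> slope b c < slope a b)"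

lemma cup_subset: "cup C \<Longrightarrow> D \<subseteq> C \<Longrightarrow> cup D"
  unfolding cup_def by blast

lemma cap_subset: "cap C \<Longrightarrow> D \<subseteq> C \<Longrightarrow> cap D"
  unfolding cap_def by blast

lemma cup_translate [simp]: "cup ((\<lambda>p. p + d) ` C) \<longleftrightarrow> cup C"
  unfolding cup_def by simp

lemma cap_translate [simp]: "cap ((\<lambda>p. p + d) ` C) \<longleftrightarrow> cap C"
  unfolding cap_def by simp

lemma card_le_1_if_no_increasing_pair:
  fixes D :: "('a::linorder \<times> 'b) set"
  assumes "finite D" "inj_on fst D" "\<And>x y. x \<in> D \<Longrightarrow> y \<in> D \<Longrightarrow> \<not> fst x < fst y"
  shows "card D \<le> 1"
proof -
  have "x = y" if "x \<in> D" "y \<in> D" for x y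
  proof -
    have "fst x = fst y"
      using assms(3)[OF that] assms(3)[OF that(2,1)] by simp
    then show ?thesis
      using inj_onD[OF assms(2)] that by blast
  qed
  then show ?thesis
    by (simp add: card_le_Suc0_iff_eq[OF assms(1)])
qed

lemma obtain_leftmost_rightmost:
  fixes C :: "('a::linorder \<times> 'b) set"
  assumes "finite C" "C \<noteq> {}"
  obtains l r where "l \<in> C" "r \<in> C" "\<And>p. p \<in> C \<Longrightarrow> fst l \<le> fst p \<and> fst p \<le> fst r"
proof -
  have "Min (fst ` C) \<in> fst ` C" "Max (fst ` C) \<in> fst ` C"
    using assms by simp_all
  then obtain l r where "l \<in> C" "fst l = Min (fst ` C)" "r \<in> C" "fst r = Max (fst ` C)"
    by auto
  then show thesis
    using that assms by simp
qed

lemma obtain_distinct_leftmost_rightmost: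
  fixes C :: "('a::linorder \<times> 'b) set"
  assumes "finite C" "inj_on fst C" "2 \<le> card C"
  obtains l r where "l \<in> C" "r \<in> C" "l \<noteq> r" "\<And>p. p \<in> C \<Longrightarrow> fst l \<le> fst p \<and> fst p \<le> fst r"
proof -
  have "C \<noteq> {}"
    using assms(3) by auto
  then obtain l r where lr: "l \<in> C" "r \<in> C" "\<And>p. p \<in> C \<Longrightarrow> fst l \<le> fst p \<and> fst p \<le> fst r"
    by (rule obtain_leftmost_rightmost[OF assms(1)]) auto
  have "l \<noteq> r"
  proof
    assume "l = r"
    then have "fst p = fst l" if "p \<in> C" for p
      using lr(3)[OF that] by (simp add: order.antisym)
    then have "card C \<le> 1"
      by (intro card_le_1_if_no_increasing_pair[OF assms(1,2)]) auto
    then show False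
      using assms(3) by simp
  qed
  then show thesis
    using that lr by blast
qed

definition slopes_within :: "real \<Rightarrow> real \<Rightarrow> (int \<times> int) set \<Rightarrow> bool" where
  "slopes_within lo hi S \<longleftrightarrow>
     inj_on fst S \<and> (\<forall>a\<in>S. \<forall>b\<in>S. fst a < fst b \<longrightarrow> lo < slope a b \<and> slope a b < hi)"

lemma slopes_within_translate [simp]:
  "slopes_within lo hi ((\<lambda>p. p + d) ` S) \<longleftrightarrow> slopes_within lo hi S"
  by (auto simp: slopes_within_def inj_on_def)

lemma slopes_within_mono:
  "slopes_within lo hi S \<Longrightarrow> lo' \<le> lo \<Longrightarrow> hi \<le> hi' \<Longrightarrow> slopes_within lo' hi' S"
  unfolding slopes_within_def by force

lemma slopes_within_Un:
  assumes "slopes_within lo hi A" "slopes_within lo hi B"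
    and "\<And>a b. a \<in> A \<Longrightarrow> b \<in> B \<Longrightarrow> fst a < fst b \<and> lo < slope a b \<and> slope a b < hi"
  shows "slopes_within lo hi (A \<union> B)"
  using assms unfolding slopes_within_def inj_on_def
  by (metis Un_iff less_irrefl not_less_iff_gr_or_eq slope_commute)

section \<open>The sets \<open>S\<^sub>k\<^sub>,\<^sub>l\<close>\<close>

declare Skl.simps [simp del]

lemma Skl_base: "k \<le> 2 \<or> l \<le> 2 \<Longrightarrow> Skl k l = {(0, 0)}"
  by (simp add: Skl.simps)

definition offset :: "nat \<Rightarrow> int \<times> int" where
  "offset r = (delta r, delta' r)"

lemma offset_Suc: "offset (Suc n) = (3 * 4 ^ n, (3 * int n + 4) * 4 ^ n)"
  by (simp add: offset_def delta_def delta'_def algebra_simps)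

lemma Skl_step:
  "\<not> (k \<le> 2 \<or> l \<le> 2) \<Longrightarrow> Skl k l = Skl (k - 1) l \<union> (\<lambda>p. p + offset (k + l - 1)) ` Skl k (l - 1)"
  by (subst Skl.simps) (simp add: offset_def case_prod_beta' plus_prod_def)

lemma finite_Skl: "finite (Skl k l)"
proof (induction k l rule: Skl.induct)
  case (1 k l)
  then show ?case
    by (cases "k \<le> 2 \<or> l \<le> 2") (simp_all add: Skl_base Skl_step)
qed

definition region :: "nat \<Rightarrow> (int \<times> int) set" where
  "region n = {(x, y). 0 \<le> x \<and> x < 4 ^ n \<and> 0 \<le> y \<and> y \<le> int n * 4 ^ n \<and>
     y \<le> (int n + 1) * x \<and> (int n + 1) * x - y \<le> 4 ^ n - (int n + 1)}"

lemma origin_in_region: "(0, 0) \<in> region n"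
proof -
  have "int n + 1 \<le> 4 ^ n"
    by (induction n) auto
  then show ?thesis
    by (simp add: region_def)
qed

lemma region_mono: "region n \<subseteq> region (Suc n)"
proof clarify
  fix x y assume "(x, y) \<in> region n"
  then have h: "0 \<le> x" "x < 4 ^ n" "0 \<le> y" "y \<le> int n * 4 ^ n" "y \<le> (int n + 1) * x"
      "(int n + 1) * x - y \<le> 4 ^ n - (int n + 1)"
    by (simp_all add: region_def)
  have "int n * 4 ^ n \<le> int (Suc n) * 4 ^ Suc n"
    by (intro mult_mono) auto
  moreover have "(int (Suc n) + 1) * x = (int n + 1) * x + x"
    by (simp add: algebra_simps)
  moreover have "(4::int) ^ Suc n = 4 * 4 ^ n"
    by simp
  ultimately show "(x, y) \<in> region (Suc n)"
    using h unfolding region_def mem_Collect_eq case_prod_conv by (intro conjI; linarith)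
qed

lemma region_offset:
  assumes "p \<in> region n"
  shows "p + offset (Suc n) \<in> region (Suc n)"
proof -
  obtain x y where p: "p = (x, y)"
    by fastforce
  have h: "0 \<le> x" "x < 4 ^ n" "0 \<le> y" "y \<le> int n * 4 ^ n" "y \<le> (int n + 1) * x"
      "(int n + 1) * x - y \<le> 4 ^ n - (int n + 1)"
    using assms by (simp_all add: region_def p)
  have shifted: "p + offset (Suc n) = (x + 3 * 4 ^ n, y + (3 * int n + 4) * 4 ^ n)"
    by (simp add: p offset_Suc)
  have pow: "(4::int) ^ Suc n = 4 * 4 ^ n" "(0::int) < 4 ^ n" "0 \<le> (3 * int n + 4) * 4 ^ n"
    by simp_all
  have y_bound: "int (Suc n) * 4 ^ Suc n = int n * 4 ^ n + (3 * int n + 4) * 4 ^ n"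
    by (simp add: algebra_simps)
  have slope_part: "(int (Suc n) + 1) * (x + 3 * 4 ^ n) =
      (int n + 1) * x + x + (3 * int n + 4) * 4 ^ n + 2 * 4 ^ n"
    by (simp add: algebra_simps)
  show ?thesis
    unfolding shifted region_def mem_Collect_eq case_prod_conv
  proof (intro conjI)
    show "0 \<le> x + 3 * 4 ^ n" "x + 3 * 4 ^ n < 4 ^ Suc n" "0 \<le> y + (3 * int n + 4) * 4 ^ n"
      using h(1-3) pow by linarith+
    show "y + (3 * int n + 4) * 4 ^ n \<le> int (Suc n) * 4 ^ Suc n"
      using h(4) y_bound by linarith
    show "y + (3 * int n + 4) * 4 ^ n \<le> (int (Suc n) + 1) * (x + 3 * 4 ^ n)"
      using h(1,5) pow(2) slope_part by linarith
    show "(int (Suc n) + 1) * (x + 3 * 4 ^ n) - (y + (3 * int n + 4) * 4 ^ n)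
        \<le> 4 ^ Suc n - (int (Suc n) + 1)"
      using h(2,6) pow(1) slope_part by linarith
  qed
qed

lemma Skl_subset_region: "Skl k l \<subseteq> region (k + l - 1)"
proof (induction k l rule: Skl.induct)
  case (1 k l)
  show ?case
  proof (cases "k \<le> 2 \<or> l \<le> 2")
    case True
    then show ?thesis by (simp add: Skl_base origin_in_region)
  next
    case False
    define n where "n = k + l - 2"
    have n: "k + l - 1 = Suc n" "k - 1 + l - 1 = n" "k + (l - 1) - 1 = n"
      using False by (auto simp: n_def)
    have "Skl (k - 1) l \<subseteq> region (Suc n)"
      using "1.IH"(1)[OF False] region_mono unfolding n by blast
    moreover have "(\<lambda>p. p + offset (Suc n)) ` Skl k (l - 1) \<subseteq> region (Suc n)"
      using "1.IH"(2)[OF False] region_offset unfolding n by blast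
    ultimately show ?thesis
      unfolding Skl_step[OF False] n(1) by blast
  qed
qed

lemma slope_across_offset:
  assumes "a \<in> region n" "b \<in> region n"
  shows "fst a < fst (b + offset (Suc n))"
    and "real n + 1 < slope a (b + offset (Suc n))"
    and "slope a (b + offset (Suc n)) < real n + 2"
proof -
  let ?b = "b + offset (Suc n)"
  show ab: "fst a < fst ?b"
    using assms by (auto simp: region_def offset_Suc)
  have "(int n + 1) * (fst ?b - fst a) < snd ?b - snd a"
    using assms by (auto simp: region_def offset_Suc algebra_simps)
  then show "real n + 1 < slope a ?b"
    using less_slope_iff[of 1 a ?b "int n + 1"] ab by simp
  have "snd ?b - snd a < (int n + 2) * (fst ?b - fst a)"
    using assms by (auto simp: region_def offset_Suc algebra_simps)
  then show "slope a ?b < real n + 2"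
    using slope_less_iff[of 1 a ?b "int n + 2"] ab by simp
qed

lemma Skl_cross_slopes:
  assumes "\<not> (k \<le> 2 \<or> l \<le> 2)" "a \<in> Skl (k - 1) l"
    and "b \<in> (\<lambda>p. p + offset (k + l - 1)) ` Skl k (l - 1)"
  shows "fst a < fst b" and "real (k + l) - 1 < slope a b" and "slope a b < real (k + l)"
proof -
  define n where "n = k + l - 2"
  have n: "k + l - 1 = Suc n" "k - 1 + l - 1 = n" "k + (l - 1) - 1 = n" "real (k + l) = real n + 2"
    using assms(1) by (auto simp: n_def)
  obtain b0 where b0: "b0 \<in> Skl k (l - 1)" and b: "b = b0 + offset (Suc n)"
    using assms(3) unfolding n(1) by blast
  have "a \<in> region n" "b0 \<in> region n"
    using assms(2) b0 Skl_subset_region[of "k - 1" l] Skl_subset_region[of k "l - 1"] n by auto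
  note across = slope_across_offset[OF this, folded b]
  show "fst a < fst b"
    using across(1) .
  show "real (k + l) - 1 < slope a b"
    unfolding n(4) using across(2) by (simp add: add.commute)
  show "slope a b < real (k + l)"
    unfolding n(4) using across(3) .
qed

lemma Skl_slopes: "slopes_within 1 (real (k + l)) (Skl k l)"
proof (induction k l rule: Skl.induct)
  case (1 k l)
  show ?case
  proof (cases "k \<le> 2 \<or> l \<le> 2")
    case True
    then show ?thesis by (simp add: Skl_base slopes_within_def)
  next
    case False
    have "slopes_within 1 (k + l) (Skl (k - 1) l)"
      using "1.IH"(1)[OF False] by (rule slopes_within_mono) auto
    moreover have "slopes_within 1 (k + l) ((\<lambda>p. p + offset (k + l - 1)) ` Skl k (l - 1))"
      using "1.IH"(2)[OF False] by (simp add: slopes_within_mono)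
    moreover have "fst a < fst b \<and> 1 < slope a b \<and> slope a b < real (k + l)"
      if a: "a \<in> Skl (k - 1) l" and b: "b \<in> (\<lambda>p. p + offset (k + l - 1)) ` Skl k (l - 1)" for a b
    proof -
      have "real (k + l) - 1 \<ge> 1"
        using False by simp
      then show ?thesis
        using Skl_cross_slopes[OF False a b] by (intro conjI) linarith+
    qed
    ultimately show ?thesis
      unfolding Skl_step[OF False] by (rule slopes_within_Un)
  qed
qed

lemma Skl_parts_slopes:
  assumes "\<not> (k \<le> 2 \<or> l \<le> 2)"
  shows "slopes_within 1 (real (k + l) - 1) (Skl (k - 1) l)"
    and "slopes_within 1 (real (k + l) - 1) ((\<lambda>p. p + offset (k + l - 1)) ` Skl k (l - 1))"
proof -
  have "real (k - 1 + l) = real (k + l) - 1" "real (k + (l - 1)) = real (k + l) - 1"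
    using assms by auto
  then show "slopes_within 1 (real (k + l) - 1) (Skl (k - 1) l)"
    and "slopes_within 1 (real (k + l) - 1) ((\<lambda>p. p + offset (k + l - 1)) ` Skl k (l - 1))"
    using Skl_slopes[of "k - 1" l] Skl_slopes[of k "l - 1"] by simp_all
qed

lemma card_cup_Skl_upper_part:
  assumes "\<not> (k \<le> 2 \<or> l \<le> 2)" "cup C" "a \<in> C" "a \<in> Skl (k - 1) l"
  shows "card (C \<inter> (\<lambda>p. p + offset (k + l - 1)) ` Skl k (l - 1)) \<le> 1"
proof (rule card_le_1_if_no_increasing_pair)
  let ?B = "(\<lambda>p. p + offset (k + l - 1)) ` Skl k (l - 1)"
  note B_slopes = Skl_parts_slopes(2)[OF assms(1)]
  show "finite (C \<inter> ?B)"
    using finite_Skl by blast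
  show "inj_on fst (C \<inter> ?B)"
    using B_slopes unfolding slopes_within_def by (meson inf_le2 inj_on_subset)
  fix x y assume x: "x \<in> C \<inter> ?B" and y: "y \<in> C \<inter> ?B"
  show "\<not> fst x < fst y"
  proof
    assume xy: "fst x < fst y"
    have "fst a < fst x" "real (k + l) - 1 < slope a x"
      using Skl_cross_slopes[OF assms(1,4)] x by blast+
    moreover have "slope x y < real (k + l) - 1"
      using B_slopes x y xy unfolding slopes_within_def by blast
    ultimately show False
      using assms(2,3) x y xy unfolding cup_def by force
  qed
qed

lemma card_cap_Skl_lower_part:
  assumes "\<not> (k \<le> 2 \<or> l \<le> 2)" "cap C" "b \<in> C" "b \<in> (\<lambda>p. p + offset (k + l - 1)) ` Skl k (l - 1)"
  shows "card (C \<inter> Skl (k - 1) l) \<le> 1"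
proof (rule card_le_1_if_no_increasing_pair)
  note A_slopes = Skl_parts_slopes(1)[OF assms(1)]
  show "finite (C \<inter> Skl (k - 1) l)"
    using finite_Skl by blast
  show "inj_on fst (C \<inter> Skl (k - 1) l)"
    using A_slopes unfolding slopes_within_def by (meson inf_le2 inj_on_subset)
  fix x y assume x: "x \<in> C \<inter> Skl (k - 1) l" and y: "y \<in> C \<inter> Skl (k - 1) l"
  show "\<not> fst x < fst y"
  proof
    assume xy: "fst x < fst y"
    have "fst y < fst b" "real (k + l) - 1 < slope y b"
      using Skl_cross_slopes[OF assms(1) _ assms(4)] y by blast+
    moreover have "slope x y < real (k + l) - 1"
      using A_slopes x y xy unfolding slopes_within_def by blast
    ultimately show False
      using assms(2,3) x y xy unfolding cap_def by force
  qed
qed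

lemma card_cup_Skl:
  assumes "2 \<le> k" "C \<subseteq> Skl k l" "cup C"
  shows "card C \<le> k - 1"
  using assms
proof (induction k l arbitrary: C rule: Skl.induct)
  case (1 k l)
  show ?case
  proof (cases "k \<le> 2 \<or> l \<le> 2")
    case True
    have "card C \<le> card {(0::int, 0::int)}"
      using "1.prems"(2) by (intro card_mono) (simp_all add: Skl_base[OF True])
    then show ?thesis
      using "1.prems"(1) by simp
  next
    case big: False
    define A where "A = Skl (k - 1) l"
    define B where "B = (\<lambda>p. p + offset (k + l - 1)) ` Skl k (l - 1)"
    have "C = (C \<inter> A) \<union> (C \<inter> B)"
      using "1.prems"(2) Skl_step[OF big] unfolding A_def B_def by blast
    then have C_split: "card C \<le> card (C \<inter> A) + card (C \<inter> B)"
      by (metis card_Un_le)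
    obtain D where D: "D \<subseteq> Skl k (l - 1)" "C \<inter> B = (\<lambda>p. p + offset (k + l - 1)) ` D"
      unfolding B_def by (meson inf_le2 subset_image_iff)
    have "cup ((\<lambda>p. p + offset (k + l - 1)) ` D)"
      using cup_subset[OF "1.prems"(3)] D(2) by (metis inf_le1)
    then have card_B: "card (C \<inter> B) \<le> k - 1"
      using "1.IH"(2)[OF big "1.prems"(1) D(1)] D(2) by (simp add: card_image)
    show ?thesis
    proof (cases "C \<inter> A = {}")
      case True
      then show ?thesis
        using C_split card_B by simp
    next
      case False
      then have "card (C \<inter> B) \<le> 1"
        using card_cup_Skl_upper_part[OF big "1.prems"(3)] unfolding A_def B_def by blast
      moreover have "card (C \<inter> A) \<le> k - 1 - 1"
        using "1.IH"(1)[OF big, of "C \<inter> A"] cup_subset[OF "1.prems"(3)] big unfolding A_def by auto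
      ultimately show ?thesis
        using C_split big by linarith
    qed
  qed
qed

lemma card_cap_Skl:
  assumes "2 \<le> l" "C \<subseteq> Skl k l" "cap C"
  shows "card C \<le> l - 1"
  using assms
proof (induction k l arbitrary: C rule: Skl.induct)
  case (1 k l)
  show ?case
  proof (cases "k \<le> 2 \<or> l \<le> 2")
    case True
    have "card C \<le> card {(0::int, 0::int)}"
      using "1.prems"(2) by (intro card_mono) (simp_all add: Skl_base[OF True])
    then show ?thesis
      using "1.prems"(1) by simp
  next
    case big: False
    define A where "A = Skl (k - 1) l"
    define B where "B = (\<lambda>p. p + offset (k + l - 1)) ` Skl k (l - 1)"
    have "C = (C \<inter> A) \<union> (C \<inter> B)"
      using "1.prems"(2) Skl_step[OF big] unfolding A_def B_def by blast
    then have C_split: "card C \<le> card (C \<inter> A) + card (C \<inter> B)"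
      by (metis card_Un_le)
    have card_A: "card (C \<inter> A) \<le> l - 1"
      using "1.IH"(1)[OF big, of "C \<inter> A"] cap_subset[OF "1.prems"(3)] "1.prems"(1)
      unfolding A_def by auto
    show ?thesis
    proof (cases "C \<inter> B = {}")
      case True
      then show ?thesis
        using C_split card_A by simp
    next
      case False
      then have "card (C \<inter> A) \<le> 1"
        using card_cap_Skl_lower_part[OF big "1.prems"(3)] unfolding A_def B_def by blast
      obtain D where D: "D \<subseteq> Skl k (l - 1)" "C \<inter> B = (\<lambda>p. p + offset (k + l - 1)) ` D"
        unfolding B_def by (meson inf_le2 subset_image_iff)
      have "cap ((\<lambda>p. p + offset (k + l - 1)) ` D)"
        using cap_subset[OF "1.prems"(3)] D(2) by (metis inf_le1)
      moreover have "2 \<le> l - 1"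
        using big by linarith
      ultimately have "card (C \<inter> B) \<le> l - 1 - 1"
        using "1.IH"(2)[OF big _ D(1)] D(2) by (simp add: card_image)
      then show ?thesis
        using C_split \<open>card (C \<inter> A) \<le> 1\<close> big by linarith
    qed
  qed
qed

section \<open>The set \<open>S\<^sub>t\<close>\<close>

definition scale :: "nat \<Rightarrow> int" where
  "scale t = (int t + 1) * 4 ^ (t + 1)"

definition copy :: "nat \<Rightarrow> nat \<Rightarrow> (int \<times> int) set" where
  "copy t i = (\<lambda>p. p + q t i) ` Skl (t - i) (i + 2)"

lemma q_eq_scale_w: "q t i = (scale t * fst (w t i), scale t * snd (w t i))"
  by (simp add: q_def scale_def Let_def)

lemma St_eq_Union_copy: "St t = (\<Union>i\<le>t - 2. copy t i)"
  unfolding St_def copy_def by (simp add: atLeast0AtMost plus_prod_def)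

lemma finite_St: "finite (St t)"
  unfolding St_eq_Union_copy copy_def by (simp add: finite_Skl)

lemma fst_w_increase: "i \<le> j \<Longrightarrow> j \<le> t \<Longrightarrow> fst (w t i) + 3 * (int j - int i) \<le> fst (w t j)"
proof (induction j rule: dec_induct)
  case (step j)
  then show ?case
    by (simp add: v_def)
qed simp

lemma snd_w_antimono: "i \<le> j \<Longrightarrow> snd (w t j) \<le> snd (w t i)"
proof (induction j rule: dec_induct)
  case (step j)
  then show ?case
    by (simp add: v_def)
qed simp

lemma copy_bounds:
  assumes "i \<le> t - 2" "p \<in> copy t i"
  shows "scale t * fst (w t i) \<le> fst p" "fst p < scale t * fst (w t i) + 4 ^ (t + 1)"
    and "scale t * snd (w t i) \<le> snd p" "snd p \<le> scale t * snd (w t i) + scale t"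
proof -
  obtain p' where p': "p' \<in> Skl (t - i) (i + 2)" "p = p' + q t i"
    using assms(2) unfolding copy_def by blast
  have "t - i + (i + 2) - 1 = t + 1"
    using assms(1) by simp
  then have "p' \<in> region (t + 1)"
    using p'(1) Skl_subset_region[of "t - i" "i + 2"] by auto
  then show "scale t * fst (w t i) \<le> fst p" "fst p < scale t * fst (w t i) + 4 ^ (t + 1)"
    and "scale t * snd (w t i) \<le> snd p" "snd p \<le> scale t * snd (w t i) + scale t"
    unfolding p'(2) q_eq_scale_w by (auto simp: region_def scale_def add.commute)
qed

lemma copies_apart:
  assumes "i < j" "j \<le> t - 2" "a \<in> copy t i" "b \<in> copy t j"
  shows "fst a < fst b" and "slope a b < 1"
proof -
  note A = copy_bounds[OF _ assms(3)] and B = copy_bounds[OF assms(2,4)]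
  have P: "(4::int) ^ (t + 1) \<le> scale t"
    unfolding scale_def by simp
  have "fst (w t i) + 3 \<le> fst (w t j)"
    using fst_w_increase[of i j t] assms(1,2) by arith
  then have "scale t * (fst (w t i) + 3) \<le> scale t * fst (w t j)"
    by (rule mult_left_mono) (simp add: scale_def)
  then have x_gap: "fst a + scale t < fst b"
    using A(1,2) B(1) assms P by (simp add: algebra_simps)
  moreover have "0 < scale t"
    by (simp add: scale_def)
  ultimately show ab: "fst a < fst b"
    by arith
  have "scale t * snd (w t j) \<le> scale t * snd (w t i)"
    using snd_w_antimono[of i j t] assms(1) by (intro mult_left_mono) (simp_all add: scale_def)
  then have "snd b - snd a \<le> scale t"
    using A(3) B(4) assms by simp
  then show "slope a b < 1"
    using slope_less_iff[of 1 a b 1] ab x_gap by simp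
qed

lemma copy_slopes: "i \<le> t - 2 \<Longrightarrow> slopes_within 1 (real (t + 2)) (copy t i)"
  using Skl_slopes[of "t - i" "i + 2"] by (simp add: copy_def)

lemma inj_on_fst_St: "inj_on fst (St t)"
proof (rule inj_onI)
  fix a b assume "a \<in> St t" "b \<in> St t" and ab: "fst a = fst b"
  then obtain i j where i: "i \<le> t - 2" "a \<in> copy t i" and j: "j \<le> t - 2" "b \<in> copy t j"
    unfolding St_eq_Union_copy by blast
  have "\<not> i < j" "\<not> j < i"
    using copies_apart(1)[OF _ j(1) i(2) j(2)] copies_apart(1)[OF _ i(1) j(2) i(2)] ab by auto
  then have "i = j"
    by simp
  then show "a = b"
    using copy_slopes[OF i(1)] i(2) j(2) ab unfolding slopes_within_def by (auto dest: inj_onD)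
qed

text \<open>
  \<open>separator t m\<close> is the mediant of the slopes \<open>-(m-1)/(t-m+1)\<close> and \<open>-m/(t-m)\<close> of \<open>v\<^bsub>m-1\<^esub>\<close>
  and \<open>v\<^sub>m\<close>; up to the positive factor \<open>2t-2m+1\<close>, \<open>tilt t m j\<close> is the height of \<open>w\<^sub>j\<close> above the
  line of that slope through the origin, which increases up to \<open>j = m\<close> and decreases afterwards.
\<close>

definition separator :: "nat \<Rightarrow> nat \<Rightarrow> real" where
  "separator t m = of_int (1 - 2 * int m) / of_int (2 * int t - 2 * int m + 1)"

definition tilt :: "nat \<Rightarrow> nat \<Rightarrow> nat \<Rightarrow> int" where
  "tilt t m j = (2 * int t - 2 * int m + 1) * snd (w t j) - (1 - 2 * int m) * fst (w t j)"

lemma tilt_Suc: "tilt t m (Suc j) = tilt t m j + 3 * int t * (2 * int m - 2 * int j - 1)"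
  by (simp add: tilt_def v_def algebra_simps)

lemma tilt_increase: "i < j \<Longrightarrow> j \<le> m \<Longrightarrow> tilt t m i + 3 * int t \<le> tilt t m j"
proof (induction j)
  case (Suc j)
  have "3 * int t * 1 \<le> 3 * int t * (2 * int m - 2 * int j - 1)"
    using Suc.prems by (intro mult_left_mono) auto
  then have "tilt t m j + 3 * int t \<le> tilt t m (Suc j)"
    by (simp add: tilt_Suc)
  then show ?case
    using Suc by (cases "i = j") auto
qed simp

lemma tilt_decrease: "m \<le> i \<Longrightarrow> i < j \<Longrightarrow> tilt t m j + 3 * int t \<le> tilt t m i"
proof (induction j)
  case (Suc j)
  have "3 * int t * (2 * int m - 2 * int j - 1) \<le> 3 * int t * (- 1)"
    using Suc.prems by (intro mult_left_mono) auto
  then have "tilt t m (Suc j) + 3 * int t \<le> tilt t m j"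
    by (simp add: tilt_Suc)
  then show ?case
    using Suc by (cases "i = j") auto
qed simp

lemma copy_tilt_estimate:
  assumes "i \<le> t - 2" "j \<le> t - 2" "a \<in> copy t i" "b \<in> copy t j" "1 \<le> m" "m \<le> t"
  shows "\<bar>(2 * int t - 2 * int m + 1) * (snd b - snd a) - (1 - 2 * int m) * (fst b - fst a)
      - scale t * (tilt t m j - tilt t m i)\<bar> < 3 * int t * scale t"
proof -
  define \<alpha> \<beta> where "\<alpha> = 2 * int t - 2 * int m + 1" and "\<beta> = 1 - 2 * int m"
  define P where "P = (4::int) ^ (t + 1)"
  define dx where "dx = (fst b - scale t * fst (w t j)) - (fst a - scale t * fst (w t i))"
  define dy where "dy = (snd b - scale t * snd (w t j)) - (snd a - scale t * snd (w t i))"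
  have split: "\<alpha> * (snd b - snd a) - \<beta> * (fst b - fst a) - scale t * (tilt t m j - tilt t m i)
      = \<alpha> * dy - \<beta> * dx"
    by (simp add: tilt_def \<alpha>_def \<beta>_def dx_def dy_def algebra_simps)
  note A = copy_bounds[OF assms(1,3)] and B = copy_bounds[OF assms(2,4)]
  have dx: "\<bar>dx\<bar> \<le> P" and dy: "\<bar>dy\<bar> \<le> scale t"
    using A B unfolding dx_def dy_def P_def by arith+
  have \<alpha>: "0 < \<alpha>" "\<alpha> \<le> 2 * int t - 1" and \<beta>: "\<bar>\<beta>\<bar> \<le> 2 * int t"
    using assms(5,6) unfolding \<alpha>_def \<beta>_def by auto
  have "\<bar>\<alpha> * dy\<bar> \<le> (2 * int t - 1) * scale t"
    unfolding abs_mult using \<alpha> dy by (intro mult_mono) auto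
  moreover have "\<bar>\<beta> * dx\<bar> \<le> 2 * int t * P"
    unfolding abs_mult using \<beta> dx by (intro mult_mono) auto
  moreover have "(int t + 1) * scale t - 2 * int t * P = (int t * int t + 1) * P"
    by (simp add: scale_def P_def algebra_simps)
  moreover have "0 < (int t * int t + 1) * P"
    unfolding P_def by (simp add: add_pos_nonneg)
  moreover have "(2 * int t - 1) * scale t + (int t + 1) * scale t = 3 * int t * scale t"
    by (simp add: algebra_simps)
  moreover have "\<bar>\<alpha> * dy - \<beta> * dx\<bar> \<le> \<bar>\<alpha> * dy\<bar> + \<bar>\<beta> * dx\<bar>"
    by (rule abs_triangle_ineq4)
  ultimately show ?thesis
    unfolding \<alpha>_def[symmetric] \<beta>_def[symmetric] split by linarith
qed

lemma separator_below_slope: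
  assumes "i < j" "j \<le> m" "m \<le> t - 2" "1 \<le> m" "a \<in> copy t i" "b \<in> copy t j"
  shows "separator t m < slope a b"
proof -
  have "i \<le> t - 2" "j \<le> t - 2" "m \<le> t"
    using assms(1-3) by auto
  note estimate = copy_tilt_estimate[OF this(1,2) assms(5,6,4) this(3)]
  have "scale t * (3 * int t) \<le> scale t * (tilt t m j - tilt t m i)"
    using tilt_increase[OF assms(1,2), of t] by (intro mult_left_mono) (auto simp: scale_def)
  then have "(1 - 2 * int m) * (fst b - fst a) < (2 * int t - 2 * int m + 1) * (snd b - snd a)"
    using estimate by (simp add: abs_less_iff algebra_simps)
  then show ?thesis
    unfolding separator_def using assms copies_apart(1)[of i j t a b]
    by (subst less_slope_iff) auto
qed

lemma slope_below_separator:
  assumes "m \<le> i" "i < j" "j \<le> t - 2" "1 \<le> m" "a \<in> copy t i" "b \<in> copy t j"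
  shows "slope a b < separator t m"
proof -
  have "i \<le> t - 2" "j \<le> t - 2" "m \<le> t"
    using assms(1-3) by auto
  note estimate = copy_tilt_estimate[OF this(1,2) assms(5,6,4) this(3)]
  have "scale t * (tilt t m j - tilt t m i) \<le> scale t * (- 3 * int t)"
    using tilt_decrease[OF assms(1,2), of t] by (intro mult_left_mono) (auto simp: scale_def)
  then have "(2 * int t - 2 * int m + 1) * (snd b - snd a) < (1 - 2 * int m) * (fst b - fst a)"
    using estimate by (simp add: abs_less_iff algebra_simps)
  then show ?thesis
    unfolding separator_def using assms copies_apart(1)[of i j t a b]
    by (subst slope_less_iff) auto
qed

lemma card_cup_copy:
  assumes "i + 2 \<le> t" "C \<subseteq> copy t i" "cup C"
  shows "card C \<le> t - i - 1"
proof -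
  obtain D where D: "D \<subseteq> Skl (t - i) (i + 2)" "C = (\<lambda>p. p + q t i) ` D"
    using assms(2) unfolding copy_def by (meson subset_image_iff)
  then show ?thesis
    using card_cup_Skl[OF _ D(1)] assms(1,3) by (simp add: card_image)
qed

lemma card_cap_copy:
  assumes "C \<subseteq> copy t i" "cap C"
  shows "card C \<le> i + 1"
proof -
  obtain D where D: "D \<subseteq> Skl (t - i) (i + 2)" "C = (\<lambda>p. p + q t i) ` D"
    using assms(1) unfolding copy_def by (meson subset_image_iff)
  then show ?thesis
    using card_cap_Skl[OF _ D(1)] assms(2) by (simp add: card_image)
qed

lemma copy_index_le:
  assumes "i \<le> t - 2" "j \<le> t - 2" "a \<in> copy t i" "b \<in> copy t j" "fst a \<le> fst b"
  shows "i \<le> j"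
  using copies_apart(1)[OF _ assms(1,4,3)] assms(5) by (meson leI not_less)

lemma slope_decrease_towards_later_copy:
  assumes "ix \<le> iy" "iy < j" "j \<le> t - 2"
    and "x \<in> copy t ix" "y \<in> copy t iy" "r \<in> copy t j" "fst x < fst y"
  shows "slope y r < slope x y"
proof (cases "ix = iy")
  case True
  then show ?thesis
    using copy_slopes[of iy t] copies_apart(2)[OF assms(2,3,5,6)] assms(2-5,7)
    unfolding slopes_within_def by fastforce
next
  case False
  then show ?thesis
    using separator_below_slope[of ix iy iy t x y] slope_below_separator[of iy iy j t y r] assms
    by simp
qed

lemma slope_increase_into_later_copy:
  assumes "i < m" "m \<le> t - 2" "l \<in> copy t i" "x \<in> copy t m" "y \<in> copy t m" "fst x < fst y"
  shows "slope l x < slope x y"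
  using copies_apart(2)[OF assms(1-4)] copy_slopes[OF assms(2)] assms(4-6)
  unfolding slopes_within_def by fastforce

lemma card_cup_St_before_last_copy:
  assumes "C \<subseteq> St t" "cup C" "j \<le> t - 2" "r \<in> C \<inter> copy t j" "\<And>p. p \<in> C \<Longrightarrow> fst p \<le> fst r"
  shows "card (C - copy t j) \<le> 1"
proof (rule card_le_1_if_no_increasing_pair)
  show "finite (C - copy t j)"
    using finite_subset[OF assms(1) finite_St] by (rule finite_Diff)
  show "inj_on fst (C - copy t j)"
    using assms(1) by (intro inj_on_subset[OF inj_on_fst_St]) blast
  fix x y assume x: "x \<in> C - copy t j" and y: "y \<in> C - copy t j"
  show "\<not> fst x < fst y"
  proof
    assume xy: "fst x < fst y"
    obtain ix iy where ix: "ix \<le> t - 2" "x \<in> copy t ix" and iy: "iy \<le> t - 2" "y \<in> copy t iy"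
      using x y assms(1) unfolding St_eq_Union_copy by blast
    have "iy \<le> j"
      using copy_index_le[OF iy(1) assms(3) iy(2)] assms(4,5) y by blast
    then have iy_j: "iy < j"
      using iy(2) y by (cases "iy = j") auto
    have "ix \<le> iy"
      using copy_index_le[OF ix(1) iy(1) ix(2) iy(2)] xy by simp
    then have "slope y r < slope x y"
      using slope_decrease_towards_later_copy[OF _ iy_j assms(3) ix(2) iy(2) _ xy] assms(4) by blast
    moreover have "fst y < fst r"
      using copies_apart(1)[OF iy_j assms(3) iy(2)] assms(4) by blast
    ultimately show False
      using assms(2,4) x y xy unfolding cup_def by force
  qed
qed

lemma card_cup_St:
  assumes "2 \<le> t" "C \<subseteq> St t" "cup C" "j \<le> t - 2" "r \<in> C \<inter> copy t j" "\<And>p. p \<in> C \<Longrightarrow> fst p \<le> fst r"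
  shows "card C \<le> t - j"
proof -
  have "C = (C \<inter> copy t j) \<union> (C - copy t j)"
    by blast
  then have "card C \<le> card (C \<inter> copy t j) + card (C - copy t j)"
    by (metis card_Un_le)
  moreover have "card (C \<inter> copy t j) \<le> t - j - 1"
    using assms(1,4) by (intro card_cup_copy cup_subset[OF assms(3)]) auto
  moreover have "card (C - copy t j) \<le> 1"
    using card_cup_St_before_last_copy[OF assms(2-6)] .
  ultimately show ?thesis
    using assms(1,4) by linarith
qed

lemma card_cap_St_later_copy:
  assumes "cap C" "l \<in> C \<inter> copy t i" "i < m" "m \<le> t - 2" "finite C"
  shows "card (C \<inter> copy t m) \<le> 1"
proof (rule card_le_1_if_no_increasing_pair)
  show "finite (C \<inter> copy t m)"
    using assms(5) by simp
  show "inj_on fst (C \<inter> copy t m)"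
    using copy_slopes[OF assms(4)] unfolding slopes_within_def by (meson inf_le2 inj_on_subset)
  fix x y assume x: "x \<in> C \<inter> copy t m" and y: "y \<in> C \<inter> copy t m"
  show "\<not> fst x < fst y"
  proof
    assume xy: "fst x < fst y"
    then have "slope l x < slope x y"
      using slope_increase_into_later_copy[OF assms(3,4)] assms(2) x y by blast
    moreover have "fst l < fst x"
      using copies_apart(1)[OF assms(3,4)] assms(2) x by blast
    ultimately show False
      using assms(1,2) x y xy unfolding cap_def by force
  qed
qed

lemma card_cap_St:
  assumes "C \<subseteq> St t" "cap C" "j \<le> t - 2" "r \<in> C \<inter> copy t j" "\<And>p. p \<in> C \<Longrightarrow> fst p \<le> fst r"
  shows "card C \<le> j + 1"
proof -
  have fin: "finite C"
    using finite_subset[OF assms(1) finite_St] .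
  have "C \<noteq> {}"
    using assms(4) by blast
  then obtain l r' where l: "l \<in> C" "r' \<in> C" "\<And>p. p \<in> C \<Longrightarrow> fst l \<le> fst p \<and> fst p \<le> fst r'"
    by (rule obtain_leftmost_rightmost[OF fin]) auto
  obtain i where i: "i \<le> t - 2" "l \<in> copy t i"
    using l(1) assms(1) unfolding St_eq_Union_copy by blast
  have "C = (C \<inter> copy t i) \<union> (\<Union>m\<in>{i<..j}. C \<inter> copy t m)"
  proof (intro equalityI subsetI)
    fix p assume p: "p \<in> C"
    then obtain m where m: "m \<le> t - 2" "p \<in> copy t m"
      using assms(1) unfolding St_eq_Union_copy by blast
    have "i \<le> m"
      using copy_index_le[OF i(1) m(1) i(2) m(2)] l(3)[OF p] by simp
    moreover have "m \<le> j"
      using copy_index_le[OF m(1) assms(3) m(2)] assms(4) assms(5)[OF p] by blast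
    ultimately show "p \<in> (C \<inter> copy t i) \<union> (\<Union>m\<in>{i<..j}. C \<inter> copy t m)"
      using m(2) p by (cases "m = i") auto
  qed blast
  then have "card C \<le> card (C \<inter> copy t i) + card (\<Union>m\<in>{i<..j}. C \<inter> copy t m)"
    by (metis card_Un_le)
  moreover have "card (C \<inter> copy t i) \<le> i + 1"
    by (intro card_cap_copy cap_subset[OF assms(2)]) auto
  moreover have "card (\<Union>m\<in>{i<..j}. C \<inter> copy t m) \<le> (\<Sum>m\<in>{i<..j}. card (C \<inter> copy t m))"
    by (rule card_UN_le) simp
  moreover have "(\<Sum>m\<in>{i<..j}. card (C \<inter> copy t m)) \<le> of_nat (card {i<..j}) * 1"
    using card_cap_St_later_copy[OF assms(2) _ _ _ fin] l(1) i(2) assms(3)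
    by (intro sum_bounded_above) auto
  moreover have "i \<le> j"
    using copy_index_le[OF i(1) assms(3) i(2)] assms(4,5) l(1) by blast
  ultimately show ?thesis
    by simp
qed

section \<open>Convex position\<close>

definition orient :: "real \<times> real \<Rightarrow> real \<times> real \<Rightarrow> real \<times> real \<Rightarrow> real" where
  "orient a b c = (fst b - fst a) * (snd c - snd b) - (snd b - snd a) * (fst c - fst b)"

lemma orient_degenerate [simp]: "orient a a c = 0" "orient a c c = 0"
  by (simp_all add: orient_def)

lemma point_on_chord:
  assumes "fst a \<le> fst b" "fst b \<le> fst c" "fst a < fst c"
  obtains p where "p \<in> closed_segment a c" "fst p = fst b"
    and "(snd b - snd p) * (fst c - fst a) = - orient a b c"
proof
  define u where "u = (fst b - fst a) / (fst c - fst a)"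
  have u: "0 \<le> u" "u \<le> 1" "u * (fst c - fst a) = fst b - fst a"
    using assms unfolding u_def by (auto simp: divide_simps)
  let ?p = "(1 - u) *\<^sub>R a + u *\<^sub>R c"
  show "?p \<in> closed_segment a c"
    using u by (auto simp: in_segment)
  have "fst ?p = fst a + u * (fst c - fst a)"
    by (simp add: algebra_simps)
  then show "fst ?p = fst b"
    using u(3) by simp
  have "(snd b - snd ?p) * (fst c - fst a)
      = (snd b - snd a) * (fst c - fst a) - (snd c - snd a) * (u * (fst c - fst a))"
    by (simp add: algebra_simps)
  then show "(snd b - snd ?p) * (fst c - fst a) = - orient a b c"
    unfolding u(3) orient_def by (simp add: algebra_simps)
qed

lemma vertical_segment:
  fixes b p p' :: "real \<times> real"
  assumes "fst p = fst b" "fst p' = fst b" "snd p \<le> snd b" "snd b \<le> snd p'"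
  shows "b \<in> closed_segment p p'"
proof (cases "snd p = snd p'")
  case True
  then have "b = p"
    using assms by (simp add: prod_eq_iff)
  then show ?thesis
    by simp
next
  case False
  define u where "u = (snd b - snd p) / (snd p' - snd p)"
  have "0 \<le> u" "u \<le> 1" "u * (snd p' - snd p) = snd b - snd p"
    using assms False unfolding u_def by (auto simp: divide_simps)
  moreover have "b = (1 - u) *\<^sub>R p + u *\<^sub>R p'"
    using assms calculation(3) by (simp add: prod_eq_iff algebra_simps)
  ultimately show ?thesis
    by (auto simp: in_segment)
qed

text \<open>If \<open>fst a < fst b < fst c\<close>, then \<open>orient a b c \<le> 0\<close> says that \<open>b\<close> lies on or above the chord \<open>ac\<close>.\<close>

lemma between_chords_in_convex_hull:
  fixes a b c l r :: "real \<times> real"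
  assumes "fst a < fst b" "fst b < fst c" "fst l \<le> fst a" "fst c \<le> fst r"
    and "orient a b c \<le> 0 \<and> 0 \<le> orient l b r \<or> 0 \<le> orient a b c \<and> orient l b r \<le> 0"
  shows "b \<in> convex hull {a, c, l, r}"
proof -
  let ?H = "convex hull {a, c, l, r}"
  obtain p where p: "p \<in> closed_segment a c" "fst p = fst b"
    "(snd b - snd p) * (fst c - fst a) = - orient a b c"
    using point_on_chord[of a b c] assms(1,2) by auto
  obtain p' where p': "p' \<in> closed_segment l r" "fst p' = fst b"
    "(snd b - snd p') * (fst r - fst l) = - orient l b r"
    using point_on_chord[of l b r] assms(1-4) by auto
  have "0 < fst c - fst a" "0 < fst r - fst l"
    using assms(1-4) by auto
  then have "snd p \<le> snd b \<longleftrightarrow> orient a b c \<le> 0" "snd b \<le> snd p \<longleftrightarrow> 0 \<le> orient a b c"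
    and "snd p' \<le> snd b \<longleftrightarrow> orient l b r \<le> 0" "snd b \<le> snd p' \<longleftrightarrow> 0 \<le> orient l b r"
    using p(3) p'(3) by (smt (verit) zero_le_mult_iff mult_le_0_iff)+
  then have "b \<in> closed_segment p p' \<or> b \<in> closed_segment p' p"
    using assms(5) p(2) p'(2) vertical_segment[of p b p'] vertical_segment[of p' b p] by argo
  moreover have "closed_segment a c \<subseteq> ?H" "closed_segment l r \<subseteq> ?H"
    by (simp_all add: closed_segment_subset_convex_hull hull_inc)
  then have "closed_segment p p' \<subseteq> ?H"
    using p(1) p'(1) by (intro closed_segment_subset_convex_hull) auto
  ultimately show ?thesis
    by (auto simp: closed_segment_commute)
qed

lemma fst_to_real [simp]: "fst (to_real p) = of_int (fst p)"
  and snd_to_real [simp]: "snd (to_real p) = of_int (snd p)"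
  by (simp_all add: to_real_def)

lemma orient_to_real:
  assumes "fst a < fst b" "fst b < fst c"
  shows "orient (to_real a) (to_real b) (to_real c)
    = of_int ((fst b - fst a) * (fst c - fst b)) * (slope b c - slope a b)"
proof -
  define dx1 dx2 dy1 dy2 where "dx1 = real_of_int (fst b - fst a)" and "dx2 = real_of_int (fst c - fst b)"
    and "dy1 = real_of_int (snd b - snd a)" and "dy2 = real_of_int (snd c - snd b)"
  have "dx1 \<noteq> 0" "dx2 \<noteq> 0"
    using assms by (simp_all add: dx1_def dx2_def)
  then have "dx1 * dy2 - dy1 * dx2 = dx1 * dx2 * (dy2 / dx2 - dy1 / dx1)"
    by (simp add: field_simps)
  then show ?thesis
    unfolding orient_def slope_def dx1_def dx2_def dy1_def dy2_def by simp
qed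

lemma convex_position_not_between_chords:
  assumes "convex_position (to_real ` P)" "{a, b, c, l, r} \<subseteq> P"
    and "fst a < fst b" "fst b < fst c" "fst l \<le> fst a" "fst c \<le> fst r"
    and "orient (to_real a) (to_real b) (to_real c) \<le> 0 \<and> 0 \<le> orient (to_real l) (to_real b) (to_real r) \<or>
      0 \<le> orient (to_real a) (to_real b) (to_real c) \<and> orient (to_real l) (to_real b) (to_real r) \<le> 0"
  shows False
proof -
  have "to_real b \<in> convex hull {to_real a, to_real c, to_real l, to_real r}"
    using assms(3-7) by (intro between_chords_in_convex_hull) auto
  moreover have "{to_real a, to_real c, to_real l, to_real r} \<subseteq> to_real ` P - {to_real b}"
    using assms(2-6) by (auto simp: to_real_def)
  ultimately have "to_real b \<in> convex hull (to_real ` P - {to_real b})"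
    using hull_mono by blast
  then show False
    using assms(1,2) unfolding convex_position_def by blast
qed

lemma convex_position_lower_cup:
  assumes "convex_position (to_real ` P)" "l \<in> P" "r \<in> P"
    and "\<And>p. p \<in> P \<Longrightarrow> fst l \<le> fst p \<and> fst p \<le> fst r"
  shows "cup {p \<in> P. 0 \<le> orient (to_real l) (to_real p) (to_real r)}"
  unfolding cup_def
proof (intro ballI impI)
  fix a b c
  assume abc: "a \<in> {p \<in> P. 0 \<le> orient (to_real l) (to_real p) (to_real r)}"
    "b \<in> {p \<in> P. 0 \<le> orient (to_real l) (to_real p) (to_real r)}"
    "c \<in> {p \<in> P. 0 \<le> orient (to_real l) (to_real p) (to_real r)}"
    and ab: "fst a < fst b" and bc: "fst b < fst c"
  show "slope a b < slope b c"
  proof (rule ccontr)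
    assume "\<not> slope a b < slope b c"
    moreover have "0 < real_of_int ((fst b - fst a) * (fst c - fst b))"
      using ab bc by simp
    ultimately have "orient (to_real a) (to_real b) (to_real c) \<le> 0"
      unfolding orient_to_real[OF ab bc] by (simp add: mult_nonneg_nonpos)
    then show False
      using convex_position_not_between_chords[OF assms(1), of a b c l r] abc ab bc assms(2-4)
      by auto
  qed
qed

lemma convex_position_upper_cap:
  assumes "convex_position (to_real ` P)" "l \<in> P" "r \<in> P"
    and "\<And>p. p \<in> P \<Longrightarrow> fst l \<le> fst p \<and> fst p \<le> fst r"
  shows "cap {p \<in> P. orient (to_real l) (to_real p) (to_real r) \<le> 0}"
  unfolding cap_def
proof (intro ballI impI)
  fix a b c
  assume abc: "a \<in> {p \<in> P. orient (to_real l) (to_real p) (to_real r) \<le> 0}"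
    "b \<in> {p \<in> P. orient (to_real l) (to_real p) (to_real r) \<le> 0}"
    "c \<in> {p \<in> P. orient (to_real l) (to_real p) (to_real r) \<le> 0}"
    and ab: "fst a < fst b" and bc: "fst b < fst c"
  show "slope b c < slope a b"
  proof (rule ccontr)
    assume "\<not> slope b c < slope a b"
    moreover have "0 < real_of_int ((fst b - fst a) * (fst c - fst b))"
      using ab bc by simp
    ultimately have "0 \<le> orient (to_real a) (to_real b) (to_real c)"
      unfolding orient_to_real[OF ab bc] by simp
    then show False
      using convex_position_not_between_chords[OF assms(1), of a b c l r] abc ab bc assms(2-4)
      by auto
  qed
qed

lemma card_Un_shared_pair:
  assumes "finite P" "L \<union> U = P" "{l, r} \<subseteq> L \<inter> U" "l \<noteq> r"
  shows "card P + 2 \<le> card L + card U"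
proof -
  have "finite L" "finite U"
    using assms(1,2) by (auto intro: finite_subset)
  then have "card P + card (L \<inter> U) = card L + card U"
    using card_Un_Int assms(2) by metis
  moreover have "2 \<le> card (L \<inter> U)"
    using card_mono[OF _ assms(3)] \<open>finite L\<close> assms(4) by simp
  ultimately show ?thesis
    by linarith
qed

theorem theorem3:
  fixes t :: nat and P :: "(int \<times> int) set"
  assumes "t \<ge> 2" and "P \<subseteq> St t" and "convex_position (to_real ` P)"
  shows "card P \<le> t - 1"
proof (cases "card P \<le> 1")
  case False
  have fin: "finite P"
    using finite_subset[OF assms(2) finite_St] .
  moreover have "2 \<le> card P"
    using False by simp
  ultimately obtain l r where lr: "l \<in> P" "r \<in> P" "l \<noteq> r"
    "\<And>p. p \<in> P \<Longrightarrow> fst l \<le> fst p \<and> fst p \<le> fst r"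
    using inj_on_subset[OF inj_on_fst_St assms(2)] obtain_distinct_leftmost_rightmost by blast
  define L where "L = {p \<in> P. 0 \<le> orient (to_real l) (to_real p) (to_real r)}"
  define U where "U = {p \<in> P. orient (to_real l) (to_real p) (to_real r) \<le> 0}"
  obtain j where j: "j \<le> t - 2" "r \<in> copy t j"
    using lr(2) assms(2) unfolding St_eq_Union_copy by blast
  have "L \<union> U = P" "{l, r} \<subseteq> L \<inter> U"
    using lr(1,2) by (auto simp: L_def U_def)
  then have "card P + 2 \<le> card L + card U"
    using card_Un_shared_pair[OF fin _ _ lr(3)] by blast
  moreover have "card L \<le> t - j"
    using card_cup_St[OF assms(1) _ convex_position_lower_cup[OF assms(3) lr(1,2,4)] j(1), of r]
      assms(2) j(2) lr by (auto simp: L_def)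
  moreover have "card U \<le> j + 1"
    using card_cap_St[OF _ convex_position_upper_cap[OF assms(3) lr(1,2,4)] j(1), of r]
      assms(2) j(2) lr by (auto simp: U_def)
  ultimately show ?thesis
    using j(1) by linarith
qed (use assms(1) in linarith)

end
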